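(* Let $N\ge 2$ and let $p$ be a path of length $N$ with steps $s_0,\dots,s_{N-1}$. Then $p$ is a perfect star path if and only if there is an integer constant $S$ with $|S|=L>1$ such that $s_n=S$ for all $n\in\{0,1,\dots,N-1\}$.
   Context: A path of length $N$ is a vector $p=(p_0,\dots,p_{N-1})$ whose entries are the integers $0,\dots,N-1$ in some order; indices are cyclic, $p_N=p_0$. The path differences are $d_n=p_{n+1}-p_n$, and the steps are $s_n=d_n$ if $|d_n|<N/2$; $s_n=N/2$ if $|d_n|=N/2$; $s_n=d_n-N$ if $d_n>N/2$; $s_n=d_n+N$ if $d_n<-N/2$. The edge lengths of $p$ are $|s_0|,\dots,|s_{N-1}|$. The path is a star path if $|s_n|\ne 1$ for all $n$ (equivalently, for every $n$, $(p_{n+1}-p_n)\bmod N\notin\{1,N-1\}$, where $x\bmod N$ is the remainder in $\{0,\dots,N-1\}$). A perfect star path is a star path all of whose edge lengths $|s_n|$ are equal. *)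

theory Defs
  imports Main
begin

definition is_path :: "nat \<Rightarrow> int list \<Rightarrow> bool" where
  "is_path N p \<longleftrightarrow> length p = N \<and> distinct p \<and> set p = {0..<int N}"

definition path_diff :: "nat \<Rightarrow> int list \<Rightarrow> nat \<Rightarrow> int" where
  "path_diff N p n = p ! (Suc n mod N) - p ! (n mod N)"

text \<open>Steps: s_n = d_n if |d_n| < N/2; N/2 if |d_n| = N/2; d_n - N if d_n > N/2;
d_n + N if d_n < -N/2.  (Comparisons with N/2 are written as 2*d vs N to stay in int;
the value N/2 only arises when N is even.)\<close>
definition path_step :: "nat \<Rightarrow> int list \<Rightarrow> nat \<Rightarrow> int" where
  "path_step N p n =
     (let d = path_diff N p n in
      if 2 * \<bar>d\<bar> < int N then d
      else if 2 * \<bar>d\<bar> = int N then int N div 2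
      else if 2 * d > int N then d - int N
      else d + int N)"

definition edge_length :: "nat \<Rightarrow> int list \<Rightarrow> nat \<Rightarrow> int" where
  "edge_length N p n = \<bar>path_step N p n\<bar>"

definition star_path :: "nat \<Rightarrow> int list \<Rightarrow> bool" where
  "star_path N p \<longleftrightarrow> is_path N p \<and> (\<forall>n<N. edge_length N p n \<noteq> 1)"

definition perfect_star_path :: "nat \<Rightarrow> int list \<Rightarrow> bool" where
  "perfect_star_path N p \<longleftrightarrow> star_path N p \<and>
     (\<forall>m<N. \<forall>n<N. edge_length N p m = edge_length N p n)"

end

theory Submission
  imports Defs "HOL-Number_Theory.Cong"
begin

(* Each step is congruent modulo N to the corresponding difference, so k consecutive steps
   (0 < k < N) sum to p_{n+k} - p_n modulo N, which is nonzero because the entries of p are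
   distinct residues. With k = 1 no step vanishes, and with k = 2 no step is followed by its
   negative. So if all steps of a star path have the same length L > 1, either 2L = N and every
   step is the normalised half-turn N/2, or 2L < N and consecutive steps of equal length must be
   equal, whence the step is constant; the converse is immediate. *)

lemma path_step_cong_path_diff: "[path_step N p n = path_diff N p n] (mod int N)"
proof -
  have "int N dvd int N div 2 - d" if "2 * \<bar>d\<bar> = int N" for d :: int
  proof -
    have "int N div 2 = \<bar>d\<bar>" using that by linarith
    then show ?thesis using that by (cases "d \<ge> 0") auto
  qed
  then show ?thesis
    by (auto simp: path_step_def Let_def cong_iff_dvd_diff)
qed

lemma path_diff_telescope:
  "(\<Sum>i<k. path_diff N p (n + i)) = p ! ((n + k) mod N) - p ! (n mod N)"
  by (induction k) (simp_all add: path_diff_def)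

lemma path_nth_mod_bounds:
  assumes "is_path N p" "0 < N"
  shows "0 \<le> p ! (i mod N) \<and> p ! (i mod N) < int N"
proof -
  have "p ! (i mod N) \<in> set p" using assms by (intro nth_mem) (simp add: is_path_def)
  with assms(1) show ?thesis unfolding is_path_def by (metis atLeastLessThan_iff)
qed

lemma abs_path_diff_less:
  assumes "is_path N p" "0 < N"
  shows "\<bar>path_diff N p n\<bar> < int N"
  using path_nth_mod_bounds[OF assms, of n] path_nth_mod_bounds[OF assms, of "Suc n"]
  unfolding path_diff_def by linarith

lemma index_cong_if_path_nth_mod_cong:
  assumes "is_path N p" "0 < N" "[p ! (i mod N) = p ! (j mod N)] (mod int N)"
  shows "[i = j] (mod N)"
proof -
  have "p ! (i mod N) = p ! (j mod N)"
    using assms cong_less_imp_eq_int path_nth_mod_bounds by metis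
  moreover have "distinct p" "i mod N < length p" "j mod N < length p"
    using assms by (auto simp: is_path_def)
  ultimately show ?thesis by (simp add: cong_def nth_eq_iff_index_eq)
qed

lemma path_steps_sum_not_cong_0:
  assumes "is_path N p" "0 < k" "k < N"
  shows "\<not> [(\<Sum>i<k. path_step N p (n + i)) = 0] (mod int N)"
proof
  assume "[(\<Sum>i<k. path_step N p (n + i)) = 0] (mod int N)"
  moreover have "[(\<Sum>i<k. path_step N p (n + i)) = (\<Sum>i<k. path_diff N p (n + i))] (mod int N)"
    by (intro cong_sum path_step_cong_path_diff)
  ultimately have "[p ! ((n + k) mod N) = p ! (n mod N)] (mod int N)"
    unfolding path_diff_telescope by (metis cong_sym cong_trans cong_iff_dvd_diff cong_0_iff)
  then have "[n + k = n] (mod N)"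
    using assms index_cong_if_path_nth_mod_cong by simp
  then have "N dvd k" by (metis add_0_right cong_add_lcancel_nat cong_0_iff)
  then show False using assms by (auto dest: dvd_imp_le)
qed

lemma path_step_nonzero:
  assumes "is_path N p" "2 \<le> N"
  shows "path_step N p n \<noteq> 0"
  using path_steps_sum_not_cong_0[OF assms(1), of 1 n] assms(2) by auto

lemma path_step_not_reversed:
  assumes "is_path N p" "3 \<le> N"
  shows "path_step N p (Suc n) \<noteq> - path_step N p n"
  using path_steps_sum_not_cong_0[OF assms(1), of 2 n] assms(2)
  by (auto simp: numeral_2_eq_2)

lemma path_step_abs_le_half:
  assumes "\<bar>path_diff N p n\<bar> < int N"
  shows "2 * \<bar>path_step N p n\<bar> \<le> int N"
    and "2 * \<bar>path_step N p n\<bar> = int N \<Longrightarrow> path_step N p n = int N div 2"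
proof -
  define d where "d = path_diff N p n"
  have half: "int N div 2 = \<bar>d\<bar>" if "2 * \<bar>d\<bar> = int N" using that by linarith
  show "2 * \<bar>path_step N p n\<bar> \<le> int N"
    and "2 * \<bar>path_step N p n\<bar> = int N \<Longrightarrow> path_step N p n = int N div 2"
    using assms half unfolding path_step_def Let_def d_def[symmetric]
    by (simp_all split: if_splits; linarith)+
qed

lemma const_if_abs_const_no_sign_flip:
  fixes f :: "nat \<Rightarrow> 'a :: linordered_idom"
  assumes "\<And>n. Suc n < N \<Longrightarrow> \<bar>f (Suc n)\<bar> = \<bar>f n\<bar>"
    and "\<And>n. f (Suc n) \<noteq> - f n"
    and "n < N"
  shows "f n = f 0"
  using assms(3)
proof (induction n)
  case (Suc n)
  have "f (Suc n) = f n \<or> f (Suc n) = - f n"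
    using assms(1)[OF Suc.prems] by (simp add: abs_eq_iff)
  then have "f (Suc n) = f n" using assms(2)[of n] by blast
  with Suc show ?case by simp
qed simp

lemma constant_step_if_perfect_star_path:
  assumes "2 \<le> N" "perfect_star_path N p"
  shows "\<exists>S. \<bar>S\<bar> > 1 \<and> (\<forall>n<N. path_step N p n = S)"
proof -
  define L where "L = \<bar>path_step N p 0\<bar>"
  have path: "is_path N p" using assms(2) by (simp add: perfect_star_path_def star_path_def)
  have abs_step: "\<bar>path_step N p n\<bar> = L" if "n < N" for n
    using assms that unfolding perfect_star_path_def edge_length_def L_def
    by (metis gr0I not_numeral_le_zero)
  have "L \<noteq> 1"
    using assms unfolding perfect_star_path_def star_path_def edge_length_def L_def by simp
  moreover have "L \<noteq> 0"
    using path_step_nonzero[OF path assms(1)] by (simp add: L_def)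
  ultimately have L_gt_1: "L > 1" by (simp add: L_def)
  have diff_less: "\<bar>path_diff N p n\<bar> < int N" for n
    using abs_path_diff_less[OF path] assms(1) by simp
  have "2 * L \<le> int N"
    using path_step_abs_le_half(1)[OF diff_less] by (simp add: L_def)
  then consider "2 * L = int N" | "3 \<le> N" using L_gt_1 by linarith
  then show ?thesis
  proof cases
    case 1
    then have "\<forall>n<N. path_step N p n = int N div 2"
      using path_step_abs_le_half(2)[OF diff_less] abs_step by auto
    moreover have "\<bar>int N div 2\<bar> > 1" using 1 L_gt_1 by simp
    ultimately show ?thesis by blast
  next
    case 2
    have "path_step N p n = path_step N p 0" if "n < N" for n
    proof (rule const_if_abs_const_no_sign_flip[OF _ _ that])
      show "\<bar>path_step N p (Suc m)\<bar> = \<bar>path_step N p m\<bar>" if "Suc m < N" for m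
        using that by (simp add: abs_step)
      show "path_step N p (Suc m) \<noteq> - path_step N p m" for m
        by (rule path_step_not_reversed[OF path 2])
    qed
    with L_gt_1 show ?thesis unfolding L_def by blast
  qed
qed

theorem mainTheorem3:
  fixes N :: nat and p :: "int list"
  assumes "N \<ge> 2" and "is_path N p"
  shows "perfect_star_path N p \<longleftrightarrow>
           (\<exists>S::int. \<bar>S\<bar> > 1 \<and> (\<forall>n<N. path_step N p n = S))"
proof
  assume "\<exists>S::int. \<bar>S\<bar> > 1 \<and> (\<forall>n<N. path_step N p n = S)"
  then obtain S where "\<bar>S\<bar> > 1" "\<forall>n<N. path_step N p n = S" by blast
  with assms(2) show "perfect_star_path N p"
    by (simp add: perfect_star_path_def star_path_def edge_length_def)
qed (use assms(1) constant_step_if_perfect_star_path in blast)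

end
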